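(* For every $n\ge 1$, $M^{\Box}_n = K^{\Box}_n = P^{\Box}_n$; in fact, a water/land coloring of the $1\times n$ fundamental domain satisfies (N1) and (N2$\Box$) on the Möbius strip iff it does so on the Klein bottle iff it does so on the projective plane.
   Context: Colorings. Each square is colored water or land. Two distinct squares are adjacent if they share an edge after all edge identifications; a set of squares is connected if its induced adjacency graph is connected (empty set counts as connected). (N1): the water is connected. For an interior (non-boundary) vertex $v$, its square-degree is the number of distinct squares having $v$ as a corner. (N2$\Box$): no interior vertex of square-degree $4$ has all incident squares water. Tile $[0,n]\times[0,1]$ by unit squares $[j-1,j]\times[0,1]$, called square $j$. The $1\times n$ Möbius strip identifies $(x,1)\sim(n-x,0)$ for $x\in[0,n]$; its boundary is the image of the vertical sides. The $1\times n$ Klein bottle additionally identifies $(0,y)\sim(n,y)$; the $1\times n$ projective plane additionally identifies $(0,y)\sim(n,1-y)$. $M^\Box_n$, $K^\Box_n$, $P^\Box_n$ are the numbers of colorings satisfying (N1) and (N2$\Box$) on the Möbius strip, Klein bottle, projective plane respectively. *)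

theory Defs
  imports Main "HOL.Real"
begin

text \<open>Points of the fundamental domain [0,n] x [0,1] are pairs of reals.
  A surface is given by a generating relation G of point identifications;
  points are identified by the equivalence closure of G.\<close>

type_synonym pt = "real \<times> real"

definition fdom :: "nat \<Rightarrow> pt set" where
  "fdom n = {(x, y). 0 \<le> x \<and> x \<le> real n \<and> 0 \<le> y \<and> y \<le> 1}"

definition mob_gen :: "nat \<Rightarrow> pt \<Rightarrow> pt \<Rightarrow> bool" where
  "mob_gen n p q \<longleftrightarrow> p \<in> fdom n \<and> q \<in> fdom n \<and> snd p = 1 \<and> q = (real n - fst p, 0)"

definition klein_gen :: "nat \<Rightarrow> pt \<Rightarrow> pt \<Rightarrow> bool" where
  "klein_gen n p q \<longleftrightarrow> mob_gen n p q \<or>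
     (p \<in> fdom n \<and> q \<in> fdom n \<and> fst p = 0 \<and> q = (real n, snd p))"

definition proj_gen :: "nat \<Rightarrow> pt \<Rightarrow> pt \<Rightarrow> bool" where
  "proj_gen n p q \<longleftrightarrow> mob_gen n p q \<or>
     (p \<in> fdom n \<and> q \<in> fdom n \<and> fst p = 0 \<and> q = (real n, 1 - snd p))"

definition ident :: "(pt \<Rightarrow> pt \<Rightarrow> bool) \<Rightarrow> pt \<Rightarrow> pt \<Rightarrow> bool" where
  "ident G = (\<lambda>p q. G p q \<or> G q p)\<^sup>*\<^sup>*"

definition cls :: "(pt \<Rightarrow> pt \<Rightarrow> bool) \<Rightarrow> pt \<Rightarrow> pt set" where
  "cls G p = {q. ident G p q}"

definition sq_edges :: "nat \<Rightarrow> pt set set" where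
  "sq_edges j =
     { {(x, 0) | x. real j - 1 \<le> x \<and> x \<le> real j},
       {(x, 1) | x. real j - 1 \<le> x \<and> x \<le> real j},
       {(real j - 1, y) | y. 0 \<le> y \<and> y \<le> 1},
       {(real j, y) | y. 0 \<le> y \<and> y \<le> 1} }"

definition sq_corners :: "nat \<Rightarrow> pt set" where
  "sq_corners j = {(real j - 1, 0), (real j, 0), (real j - 1, 1), (real j, 1)}"

text \<open>Two distinct squares are adjacent if they share an edge after identification,
  i.e. some edge of one and some edge of the other have the same image in the quotient.\<close>
definition adjacent :: "(pt \<Rightarrow> pt \<Rightarrow> bool) \<Rightarrow> nat \<Rightarrow> nat \<Rightarrow> nat \<Rightarrow> bool" where
  "adjacent G n i j \<longleftrightarrow> i \<noteq> j \<and> i \<in> {1..n} \<and> j \<in> {1..n} \<and>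
     (\<exists>e\<in>sq_edges i. \<exists>f\<in>sq_edges j. cls G ` e = cls G ` f)"

definition vertices :: "(pt \<Rightarrow> pt \<Rightarrow> bool) \<Rightarrow> nat \<Rightarrow> pt set set" where
  "vertices G n = {cls G c | c j. j \<in> {1..n} \<and> c \<in> sq_corners j}"

definition has_corner :: "(pt \<Rightarrow> pt \<Rightarrow> bool) \<Rightarrow> pt set \<Rightarrow> nat \<Rightarrow> bool" where
  "has_corner G v j \<longleftrightarrow> (\<exists>c\<in>sq_corners j. cls G c = v)"

definition sq_degree :: "(pt \<Rightarrow> pt \<Rightarrow> bool) \<Rightarrow> nat \<Rightarrow> pt set \<Rightarrow> nat" where
  "sq_degree G n v = card {j \<in> {1..n}. has_corner G v j}"

text \<open>Boundary point sets: image of the vertical sides for the Moebius strip; empty otherwise.\<close>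
definition mob_boundary :: "nat \<Rightarrow> pt set" where
  "mob_boundary n = {p \<in> fdom n. fst p = 0 \<or> fst p = real n}"

definition N1 :: "(pt \<Rightarrow> pt \<Rightarrow> bool) \<Rightarrow> nat \<Rightarrow> nat set \<Rightarrow> bool" where
  "N1 G n W \<longleftrightarrow> (\<forall>i\<in>W. \<forall>j\<in>W. (\<lambda>a b. a \<in> W \<and> b \<in> W \<and> adjacent G n a b)\<^sup>*\<^sup>* i j)"

text \<open>(N2box): no interior vertex of square-degree 4 has all incident squares water.
  A vertex is interior iff its class contains no boundary point.\<close>
definition N2box :: "(pt \<Rightarrow> pt \<Rightarrow> bool) \<Rightarrow> pt set \<Rightarrow> nat \<Rightarrow> nat set \<Rightarrow> bool" where
  "N2box G B n W \<longleftrightarrow> (\<forall>v\<in>vertices G n. v \<inter> B = {} \<and> sq_degree G n v = 4 \<longrightarrow>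
       \<not> (\<forall>j\<in>{1..n}. has_corner G v j \<longrightarrow> j \<in> W))"

definition valid :: "(pt \<Rightarrow> pt \<Rightarrow> bool) \<Rightarrow> pt set \<Rightarrow> nat \<Rightarrow> nat set \<Rightarrow> bool" where
  "valid G B n W \<longleftrightarrow> W \<subseteq> {1..n} \<and> N1 G n W \<and> N2box G B n W"

definition valid_M :: "nat \<Rightarrow> nat set \<Rightarrow> bool" where
  "valid_M n W = valid (mob_gen n) (mob_boundary n) n W"
definition valid_K :: "nat \<Rightarrow> nat set \<Rightarrow> bool" where
  "valid_K n W = valid (klein_gen n) {} n W"
definition valid_P :: "nat \<Rightarrow> nat set \<Rightarrow> bool" where
  "valid_P n W = valid (proj_gen n) {} n W"

text \<open>Colorings are identified with their set of water squares W \<subseteq> {1..n}.\<close>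
definition M_box :: "nat \<Rightarrow> nat" where "M_box n = card {W. valid_M n W}"
definition K_box :: "nat \<Rightarrow> nat" where "K_box n = card {W. valid_K n W}"
definition P_box :: "nat \<Rightarrow> nat" where "P_box n = card {W. valid_P n W}"

end

theory Submission
  imports Defs
begin

(* Each surface is handled through a representative map sending every point to a canonical
   point of its identification class, so that identification becomes equality of
   representatives.  The Klein bottle and the projective plane arise from the Moebius strip by
   additionally gluing only its two vertical sides; their representatives are the Moebius one
   followed by folding the right side x = n onto the left side x = 0.  Hence a point off the
   vertical sides is identified with exactly the same points on all three surfaces.

   Every edge except the two vertical sides contains such a point (its midpoint), so on all three
   surfaces squares i and j are adjacent iff they are consecutive or i + j = n + 1; the vertical
   sides belong to squares 1 and n, which are adjacent anyway.  A vertex on the vertical sides is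
   a boundary vertex of the Moebius strip, and on the closed surfaces only squares 1 and n have
   it as a corner, so its square-degree is at most 2 and (N2box) says nothing about it; at all
   other vertices the three surfaces agree. *)

lemma ident_eq_rtranclp_symclp: "ident G = (symclp G)\<^sup>*\<^sup>*"
  unfolding ident_def symclp_def by (rule refl)

lemma ident_refl [simp]: "ident G p p"
  by (simp add: ident_def)

lemma ident_mono:
  assumes "\<And>p q. G p q \<Longrightarrow> G' p q" "ident G p q"
  shows "ident G' p q"
proof -
  have "symclp G \<le> symclp G'"
    using assms(1) by (auto simp: symclp_def)
  then show ?thesis
    using assms(2) unfolding ident_eq_rtranclp_symclp by (rule rtranclp_mono[THEN predicate2D])
qed

lemma ident_trans [trans]: "ident G p q \<Longrightarrow> ident G q r \<Longrightarrow> ident G p r"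
  unfolding ident_def by (rule rtranclp_trans)

lemma ident_of_gen: "G p q \<or> G q p \<Longrightarrow> ident G p q"
  unfolding ident_def by (rule r_into_rtranclp)

locale ident_rep_map =
  fixes G :: "pt \<Rightarrow> pt \<Rightarrow> bool" and \<phi> :: "pt \<Rightarrow> pt"
  assumes rep_resp: "G p q \<Longrightarrow> \<phi> p = \<phi> q"
    and ident_rep: "ident G p (\<phi> p)"
begin

lemma ident_iff_rep_eq: "ident G p q \<longleftrightarrow> \<phi> p = \<phi> q"
proof
  assume "ident G p q"
  then show "\<phi> p = \<phi> q"
    unfolding ident_def by (induction rule: rtranclp_induct) (auto dest: rep_resp)
next
  assume "\<phi> p = \<phi> q"
  moreover have "ident G (\<phi> q) q"
    using ident_rep by (simp add: ident_eq_rtranclp_symclp rtranclp_symclp_sym)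
  ultimately show "ident G p q"
    using ident_rep ident_trans by metis
qed

lemma cls_eq_fibre: "cls G p = {q. \<phi> q = \<phi> p}"
  by (auto simp: cls_def ident_iff_rep_eq)

lemma cls_eq_cls_iff: "cls G p = cls G q \<longleftrightarrow> \<phi> p = \<phi> q"
  by (auto simp: cls_eq_fibre)

lemma cls_image_eq_iff: "cls G ` e = cls G ` f \<longleftrightarrow> \<phi> ` e = \<phi> ` f"
proof -
  define fibre where "fibre v = {q. \<phi> q = v}" for v
  have cls_eq: "cls G = fibre \<circ> \<phi>"
    by (auto simp: cls_eq_fibre fibre_def)
  have "inj_on fibre (range \<phi>)"
    unfolding fibre_def inj_on_def by auto
  then show ?thesis
    unfolding cls_eq image_comp[symmetric] by (rule inj_on_image_eq_iff) auto
qed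

end

definition corner_squares :: "(pt \<Rightarrow> pt) \<Rightarrow> nat \<Rightarrow> pt \<Rightarrow> nat set" where
  "corner_squares \<phi> n c = {j \<in> {1..n}. \<exists>c'\<in>sq_corners j. \<phi> c' = \<phi> c}"

lemma (in ident_rep_map) N2box_iff_corner_squares:
  "N2box G B n W \<longleftrightarrow>
     (\<forall>j\<in>{1..n}. \<forall>c\<in>sq_corners j. cls G c \<inter> B = {} \<and> card (corner_squares \<phi> n c) = 4 \<longrightarrow>
        \<not> corner_squares \<phi> n c \<subseteq> W)"
  (is "_ \<longleftrightarrow> ?rhs")
proof -
  have squares: "{j \<in> {1..n}. has_corner G (cls G c) j} = corner_squares \<phi> n c" for c
    by (auto simp: has_corner_def corner_squares_def cls_eq_cls_iff)
  have "N2box G B n W \<longleftrightarrow>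
     (\<forall>j\<in>{1..n}. \<forall>c\<in>sq_corners j. cls G c \<inter> B = {} \<and> sq_degree G n (cls G c) = 4 \<longrightarrow>
        \<not> (\<forall>j'\<in>{1..n}. has_corner G (cls G c) j' \<longrightarrow> j' \<in> W))"
    unfolding N2box_def vertices_def by blast
  also have "\<dots> \<longleftrightarrow> ?rhs"
    unfolding sq_degree_def squares[symmetric] by blast
  finally show ?thesis .
qed

definition bottom_edge :: "nat \<Rightarrow> pt set" where
  "bottom_edge k = {(x, 0) | x. real k - 1 \<le> x \<and> x \<le> real k}"

definition top_edge :: "nat \<Rightarrow> pt set" where
  "top_edge k = {(x, 1) | x. real k - 1 \<le> x \<and> x \<le> real k}"

definition vert_edge :: "nat \<Rightarrow> pt set" where
  "vert_edge m = {(real m, y) | y. 0 \<le> y \<and> y \<le> 1}"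

lemma sq_edges_eq: "1 \<le> j \<Longrightarrow> sq_edges j = {bottom_edge j, top_edge j, vert_edge (j - 1), vert_edge j}"
  by (simp add: sq_edges_def bottom_edge_def top_edge_def vert_edge_def of_nat_diff)

lemma corner_in_fdom: "j \<in> {1..n} \<Longrightarrow> c \<in> sq_corners j \<Longrightarrow> c \<in> fdom n"
  by (auto simp: sq_corners_def fdom_def)

lemma of_nat_neq_minus_half: "real a \<noteq> real b - 1/2"
proof
  assume "real a = real b - 1/2"
  then have "a < b" "b < a + 1" by linarith+
  then show False by simp
qed

lemma eq_if_minus_half_between:
  assumes "real k' - 1 \<le> real k - 1/2" "real k - 1/2 \<le> real k'"
  shows "k = k'"
proof -
  have "k' < k + 1" "k < k' + 1" using assms by linarith+
  then show ?thesis by simp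
qed

definition on_side :: "nat \<Rightarrow> pt \<Rightarrow> bool" where
  "on_side n p \<longleftrightarrow> fst p = 0 \<or> fst p = real n"

definition mob_rep :: "nat \<Rightarrow> pt \<Rightarrow> pt" where
  "mob_rep n p = (if p \<in> fdom n \<and> snd p = 1 then (real n - fst p, 0) else p)"

lemma mob_rep_map: "ident_rep_map (mob_gen n) (mob_rep n)"
proof
  show "mob_rep n p = mob_rep n q" if "mob_gen n p q" for p q
    using that by (auto simp: mob_gen_def mob_rep_def fdom_def)
  show "ident (mob_gen n) p (mob_rep n p)" for p
    by (cases "p \<in> fdom n \<and> snd p = 1")
      (auto simp: mob_rep_def mob_gen_def fdom_def intro: ident_of_gen)
qed

lemma on_side_mob_rep: "p \<in> fdom n \<Longrightarrow> on_side n (mob_rep n p) \<longleftrightarrow> on_side n p"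
  by (auto simp: mob_rep_def fdom_def on_side_def)

lemma mob_boundary_disjoint_cls:
  assumes "c \<in> fdom n" "\<not> on_side n c"
  shows "cls (mob_gen n) c \<inter> mob_boundary n = {}"
proof -
  have "\<not> on_side n q" if "q \<in> fdom n" "mob_rep n q = mob_rep n c" for q
    using that assms on_side_mob_rep by metis
  then show ?thesis
    by (auto simp: ident_rep_map.cls_eq_fibre[OF mob_rep_map] mob_boundary_def on_side_def)
qed

definition mobius_adjacent :: "nat \<Rightarrow> nat \<Rightarrow> nat \<Rightarrow> bool" where
  "mobius_adjacent n i j \<longleftrightarrow>
     i \<noteq> j \<and> i \<in> {1..n} \<and> j \<in> {1..n} \<and> (j = i + 1 \<or> i = j + 1 \<or> i + j = n + 1)"

locale mobius_side_gluing = ident_rep_map G \<psi> for G \<psi> +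
  fixes n :: nat
  assumes n_pos: "1 \<le> n"
    and mob_gen_le: "mob_gen n p q \<Longrightarrow> G p q"
    and rep_eq_off_side:
      "p \<in> fdom n \<Longrightarrow> q \<in> fdom n \<Longrightarrow> \<not> on_side n q \<Longrightarrow>
        \<psi> p = \<psi> q \<longleftrightarrow> mob_rep n p = mob_rep n q"
begin

lemma on_side_iff_of_rep_eq:
  assumes "p \<in> fdom n" "q \<in> fdom n" "\<psi> p = \<psi> q"
  shows "on_side n p \<longleftrightarrow> on_side n q"
  using assms rep_eq_off_side on_side_mob_rep by metis

lemma rep_eq_off_side_point:
  assumes "p \<in> fdom n" "\<psi> p = \<psi> (x, y)" "0 < x" "x < real n" "0 \<le> y" "y \<le> 1"
  shows "mob_rep n p = mob_rep n (x, y)"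
  using assms rep_eq_off_side by (simp add: fdom_def on_side_def)

lemma top_edge_image:
  assumes "j \<in> {1..n}"
  shows "\<psi> ` top_edge j = \<psi> ` bottom_edge (n + 1 - j)"
proof -
  have "bottom_edge (n + 1 - j) = (\<lambda>p. (real n - fst p, 0)) ` top_edge j"
  proof (intro equalityI subsetI)
    fix p assume "p \<in> bottom_edge (n + 1 - j)"
    then obtain x where "p = (x, 0)" "real n - real j \<le> x" "x \<le> real n - real j + 1"
      using assms by (auto simp: bottom_edge_def of_nat_diff)
    then show "p \<in> (\<lambda>p. (real n - fst p, 0)) ` top_edge j"
      by (auto simp: top_edge_def image_iff intro!: exI[of _ "real n - x"])
  qed (use assms in \<open>auto simp: bottom_edge_def top_edge_def of_nat_diff\<close>)
  moreover have "\<psi> (real n - fst p, 0) = \<psi> p" if "p \<in> top_edge j" for p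
    using that assms
    by (auto simp: top_edge_def mob_gen_def fdom_def intro!: rep_resp[symmetric] mob_gen_le)
  ultimately show ?thesis
    by (simp add: image_image cong: image_cong)
qed

lemma bottom_edge_image_inj:
  assumes "k \<in> {1..n}" "k' \<in> {1..n}" "\<psi> ` bottom_edge k = \<psi> ` bottom_edge k'"
  shows "k = k'"
proof -
  have "(real k - 1/2, 0) \<in> bottom_edge k"
    by (auto simp: bottom_edge_def)
  then have "\<psi> (real k - 1/2, 0) \<in> \<psi> ` bottom_edge k'"
    using assms(3) by blast
  then obtain x where x: "real k' - 1 \<le> x" "x \<le> real k'" and "\<psi> (x, 0) = \<psi> (real k - 1/2, 0)"
    by (auto simp: bottom_edge_def)
  then have "mob_rep n (x, 0) = mob_rep n (real k - 1/2, 0)"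
    using assms(1,2) by (intro rep_eq_off_side_point) (auto simp: fdom_def)
  then have "x = real k - 1/2"
    by (simp add: mob_rep_def)
  with x show ?thesis
    by (intro eq_if_minus_half_between) auto
qed

lemma bottom_vert_edge_image_neq:
  assumes "k \<in> {1..n}" "m \<le> n"
  shows "\<psi> ` bottom_edge k \<noteq> \<psi> ` vert_edge m"
proof
  assume "\<psi> ` bottom_edge k = \<psi> ` vert_edge m"
  moreover have "(real k - 1/2, 0) \<in> bottom_edge k"
    by (auto simp: bottom_edge_def)
  ultimately have "\<psi> (real k - 1/2, 0) \<in> \<psi> ` vert_edge m"
    by blast
  then obtain y where y: "0 \<le> y" "y \<le> 1" and "\<psi> (real m, y) = \<psi> (real k - 1/2, 0)"
    by (auto simp: vert_edge_def)
  then have "mob_rep n (real m, y) = mob_rep n (real k - 1/2, 0)"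
    using assms y by (intro rep_eq_off_side_point) (auto simp: fdom_def)
  then have "mob_rep n (real m, y) = (real k - 1/2, 0)"
    by (simp add: mob_rep_def)
  then have "real m = real k - 1/2 \<or> real (n - m) = real k - 1/2"
    using assms(2) by (auto simp: mob_rep_def of_nat_diff split: if_splits)
  then show False
    using of_nat_neq_minus_half by blast
qed

lemma vert_edge_image_eq:
  assumes "m \<le> n" "m' \<le> n" "\<psi> ` vert_edge m = \<psi> ` vert_edge m'"
  shows "m' = m \<or> (m \<in> {0, n} \<and> m' \<in> {0, n})"
proof -
  have off_side: "m' = m"
    if "0 < m" "m < n" "m' \<le> n" "\<psi> ` vert_edge m = \<psi> ` vert_edge m'" for m m'
  proof -
    have "(real m, 1/2) \<in> vert_edge m"
      by (auto simp: vert_edge_def intro!: exI[of _ "1/2"])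
    then have "\<psi> (real m, 1/2) \<in> \<psi> ` vert_edge m'"
      using that(4) by blast
    then obtain y where "0 \<le> y" "y \<le> 1" and "\<psi> (real m', y) = \<psi> (real m, 1/2)"
      by (auto simp: vert_edge_def)
    then have "mob_rep n (real m', y) = mob_rep n (real m, 1/2)"
      using that by (intro rep_eq_off_side_point) (auto simp: fdom_def)
    then have "mob_rep n (real m', y) = (real m, 1/2)"
      by (simp add: mob_rep_def)
    then show ?thesis
      by (auto simp: mob_rep_def split: if_splits)
  qed
  show ?thesis
  proof (cases "0 < m \<and> m < n")
    case True
    then show ?thesis
      using off_side assms(2,3) by blast
  next
    case m: False
    show ?thesis
    proof (cases "0 < m' \<and> m' < n")
      case True
      then show ?thesis
        using off_side[of m' m] assms(1) assms(3)[symmetric] by blast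
    next
      case False
      with m assms(1,2) show ?thesis
        by auto
    qed
  qed
qed

lemma edge_image_cases [consumes 2]:
  assumes "i \<in> {1..n}" "e \<in> sq_edges i"
  obtains (bottom) a where "a = i \<or> a = n + 1 - i" "\<psi> ` e = \<psi> ` bottom_edge a"
    | (vert) m where "m = i - 1 \<or> m = i" "\<psi> ` e = \<psi> ` vert_edge m"
  using assms sq_edges_eq[of i] top_edge_image[OF assms(1)] by auto

lemma edge_image_eq_imp_neighbours:
  assumes ij: "i \<in> {1..n}" "j \<in> {1..n}" "i \<noteq> j"
    and e: "e \<in> sq_edges i" and f: "f \<in> sq_edges j" and ef: "\<psi> ` e = \<psi> ` f"
  shows "j = i + 1 \<or> i = j + 1 \<or> i + j = n + 1"
  using ij(1) e
proof (cases rule: edge_image_cases)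
  case a: (bottom a)
  have "a \<in> {1..n}"
    using a(1) ij(1) by auto
  from ij(2) f show ?thesis
  proof (cases rule: edge_image_cases)
    case b: (bottom b)
    have "b \<in> {1..n}"
      using b(1) ij(2) by auto
    then have "a = b"
      using bottom_edge_image_inj \<open>a \<in> {1..n}\<close> a(2) b(2) ef by metis
    then show ?thesis
      using a(1) b(1) ij by auto
  next
    case m': (vert m')
    have "m' \<le> n"
      using m'(1) ij(2) by auto
    then show ?thesis
      using bottom_vert_edge_image_neq \<open>a \<in> {1..n}\<close> a(2) m'(2) ef by metis
  qed
next
  case m: (vert m)
  have "m \<le> n"
    using m(1) ij(1) by auto
  from ij(2) f show ?thesis
  proof (cases rule: edge_image_cases)
    case b: (bottom b)
    have "b \<in> {1..n}"
      using b(1) ij(2) by auto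
    then show ?thesis
      using bottom_vert_edge_image_neq \<open>m \<le> n\<close> m(2) b(2) ef by metis
  next
    case m': (vert m')
    have "m' \<le> n"
      using m'(1) ij(2) by auto
    then have "m' = m \<or> (m \<in> {0, n} \<and> m' \<in> {0, n})"
      using vert_edge_image_eq \<open>m \<le> n\<close> m(2) m'(2) ef by simp
    then show ?thesis
      using m(1) m'(1) ij by auto
  qed
qed

lemma adjacent_iff_mobius_adjacent: "adjacent G n i j \<longleftrightarrow> mobius_adjacent n i j"
proof
  assume "adjacent G n i j"
  then obtain e f where ij: "i \<in> {1..n}" "j \<in> {1..n}" "i \<noteq> j"
    and "e \<in> sq_edges i" "f \<in> sq_edges j" "\<psi> ` e = \<psi> ` f"
    by (auto simp: adjacent_def cls_image_eq_iff)
  then have "j = i + 1 \<or> i = j + 1 \<or> i + j = n + 1"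
    by (rule edge_image_eq_imp_neighbours)
  with ij show "mobius_adjacent n i j"
    by (simp add: mobius_adjacent_def)
next
  assume adj: "mobius_adjacent n i j"
  then have i: "i \<in> {1..n}" and j: "j \<in> {1..n}"
    by (auto simp: mobius_adjacent_def)
  have edges: "vert_edge i \<in> sq_edges i" "top_edge i \<in> sq_edges i"
      "vert_edge (j - 1) \<in> sq_edges j" "vert_edge j \<in> sq_edges j" "bottom_edge j \<in> sq_edges j"
    using i j by (simp_all add: sq_edges_eq)
  consider "j = i + 1" | "i = j + 1" | "j = n + 1 - i"
    using adj by (auto simp: mobius_adjacent_def)
  then have "\<exists>e\<in>sq_edges i. \<exists>f\<in>sq_edges j. \<psi> ` e = \<psi> ` f"
  proof cases
    case 1
    then show ?thesis
      using edges(1,3) by auto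
  next
    case 2
    have "vert_edge (i - 1) \<in> sq_edges i"
      using i by (simp add: sq_edges_eq)
    with 2 show ?thesis
      using edges(4) by auto
  next
    case 3
    then show ?thesis
      using edges(2,5) top_edge_image[OF i] by auto
  qed
  with adj show "adjacent G n i j"
    unfolding adjacent_def cls_image_eq_iff mobius_adjacent_def by blast
qed

lemma corner_squares_on_side:
  assumes "c \<in> fdom n" "on_side n c"
  shows "corner_squares \<psi> n c \<subseteq> {1, n}"
proof
  fix j assume "j \<in> corner_squares \<psi> n c"
  then obtain c' where j: "j \<in> {1..n}" and c': "c' \<in> sq_corners j" "\<psi> c' = \<psi> c"
    by (auto simp: corner_squares_def)
  then have "on_side n c'"
    using assms on_side_iff_of_rep_eq corner_in_fdom by blast
  with j c'(1) show "j \<in> {1, n}"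
    by (auto simp: on_side_def sq_corners_def)
qed

lemma N2box_iff_N2box_mob: "N2box G {} n W \<longleftrightarrow> N2box (mob_gen n) (mob_boundary n) n W"
proof -
  have corner:
    "(card (corner_squares \<psi> n c) = 4 \<longrightarrow> \<not> corner_squares \<psi> n c \<subseteq> W) \<longleftrightarrow>
     (cls (mob_gen n) c \<inter> mob_boundary n = {} \<and> card (corner_squares (mob_rep n) n c) = 4 \<longrightarrow>
        \<not> corner_squares (mob_rep n) n c \<subseteq> W)"
    if "c \<in> fdom n" for c
  proof (cases "on_side n c")
    case True
    have "card (corner_squares \<psi> n c) \<le> card {1, n}"
      using corner_squares_on_side[OF that True] by (rule card_mono[rotated]) simp
    also have "\<dots> \<le> 2"
      by (simp add: card_insert_le_m1)
    finally have "card (corner_squares \<psi> n c) \<noteq> 4"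
      by simp
    moreover have "c \<in> cls (mob_gen n) c \<inter> mob_boundary n"
      using that True by (auto simp: cls_def mob_boundary_def on_side_def)
    ultimately show ?thesis
      by blast
  next
    case False
    have "\<psi> c' = \<psi> c \<longleftrightarrow> mob_rep n c' = mob_rep n c"
      if "j \<in> {1..n}" "c' \<in> sq_corners j" for j c'
      using rep_eq_off_side[OF corner_in_fdom[OF that] \<open>c \<in> fdom n\<close> False] .
    then have "corner_squares \<psi> n c = corner_squares (mob_rep n) n c"
      unfolding corner_squares_def by blast
    then show ?thesis
      using mob_boundary_disjoint_cls[OF that False] by simp
  qed
  show ?thesis
    unfolding N2box_iff_corner_squares ident_rep_map.N2box_iff_corner_squares[OF mob_rep_map]
    using corner corner_in_fdom by auto
qed

end

lemma mob_side_gluing: "1 \<le> n \<Longrightarrow> mobius_side_gluing (mob_gen n) (mob_rep n) n"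
  by (intro mobius_side_gluing.intro mob_rep_map) (simp add: mobius_side_gluing_axioms_def)

lemma (in mobius_side_gluing) valid_iff_valid_M: "valid G {} n W \<longleftrightarrow> valid_M n W"
proof -
  have "adjacent G n = adjacent (mob_gen n) n"
    using adjacent_iff_mobius_adjacent
      mobius_side_gluing.adjacent_iff_mobius_adjacent[OF mob_side_gluing[OF n_pos]] by blast
  then show ?thesis
    by (simp add: valid_M_def valid_def N1_def N2box_iff_N2box_mob)
qed

definition fold_side :: "(real \<Rightarrow> real) \<Rightarrow> nat \<Rightarrow> pt \<Rightarrow> pt" where
  "fold_side r n p = (if p \<in> fdom n \<and> fst p = real n then (0, r (snd p)) else p)"

lemma fold_side_eq_off_side_iff: "\<not> on_side n b \<Longrightarrow> fold_side r n a = b \<longleftrightarrow> a = b"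
  by (auto simp: fold_side_def on_side_def)

lemma mobius_side_gluing_fold_side:
  assumes "1 \<le> n"
    and mob_gen_le: "\<And>p q. mob_gen n p q \<Longrightarrow> G p q"
    and gluing: "\<And>y. 0 \<le> y \<Longrightarrow> y \<le> 1 \<Longrightarrow> G (0, r y) (real n, y)"
    and resp: "\<And>p q. G p q \<Longrightarrow> fold_side r n (mob_rep n p) = fold_side r n (mob_rep n q)"
  shows "mobius_side_gluing G (fold_side r n \<circ> mob_rep n) n"
proof (unfold_locales)
  have ident_fold_side: "ident G a (fold_side r n a)" for a
  proof (cases "a \<in> fdom n \<and> fst a = real n")
    case True
    then have "G (0, r (snd a)) a"
      using gluing[of "snd a"] by (cases a) (auto simp: fdom_def)
    with True show ?thesis
      by (auto simp: fold_side_def intro: ident_of_gen)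
  qed (auto simp: fold_side_def)
  fix p
  have "ident G p (mob_rep n p)"
    using ident_rep_map.ident_rep[OF mob_rep_map] mob_gen_le by (rule ident_mono[rotated])
  also have "ident G (mob_rep n p) (fold_side r n (mob_rep n p))"
    by (rule ident_fold_side)
  finally show "ident G p ((fold_side r n \<circ> mob_rep n) p)"
    by simp
next
  fix p q
  assume "p \<in> fdom n" "q \<in> fdom n" "\<not> on_side n q"
  then have off_side: "\<not> on_side n (mob_rep n q)"
    using on_side_mob_rep by blast
  then have fixed: "fold_side r n (mob_rep n q) = mob_rep n q"
    by (simp add: fold_side_eq_off_side_iff)
  show "(fold_side r n \<circ> mob_rep n) p = (fold_side r n \<circ> mob_rep n) q \<longleftrightarrow> mob_rep n p = mob_rep n q"
    by (simp only: comp_apply fixed fold_side_eq_off_side_iff[OF off_side])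
qed (use assms in auto)

lemma klein_side_gluing:
  "1 \<le> n \<Longrightarrow> mobius_side_gluing (klein_gen n) (fold_side id n \<circ> mob_rep n) n"
  by (rule mobius_side_gluing_fold_side)
    (auto simp: klein_gen_def mob_gen_def fdom_def fold_side_def mob_rep_def)

lemma proj_side_gluing:
  "1 \<le> n \<Longrightarrow> mobius_side_gluing (proj_gen n) (fold_side (\<lambda>y. 1 - y) n \<circ> mob_rep n) n"
  by (rule mobius_side_gluing_fold_side)
    (auto simp: proj_gen_def mob_gen_def fdom_def fold_side_def mob_rep_def)

theorem lemma4p1:
  fixes n :: nat
  assumes "n \<ge> 1"
  shows "M_box n = K_box n \<and> K_box n = P_box n \<and>
         (\<forall>W \<subseteq> {1..n}. (valid_M n W \<longleftrightarrow> valid_K n W) \<and> (valid_K n W \<longleftrightarrow> valid_P n W))"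
proof -
  have K: "valid_K n W \<longleftrightarrow> valid_M n W" for W
    using mobius_side_gluing.valid_iff_valid_M[OF klein_side_gluing[OF assms]] by (simp add: valid_K_def)
  have P: "valid_P n W \<longleftrightarrow> valid_M n W" for W
    using mobius_side_gluing.valid_iff_valid_M[OF proj_side_gluing[OF assms]] by (simp add: valid_P_def)
  show ?thesis
    by (simp add: M_box_def K_box_def P_box_def K P)
qed

end
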